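(* Let $\mathbb{K}=(G,M,I)$ be a finite formal context with concept lattice $\underline{\mathfrak{B}}(\mathbb{K})$ and let $\underline{S}$ be an interval of $\underline{\mathfrak{B}}(\mathbb{K})$ with $|\underline{S}|=1$, say $\underline{S}=\{s\}=[s,s]$. Then $\underline{S}$ is dismantling for $\underline{\mathfrak{B}}(\mathbb{K})$ if and only if $s$ is doubly irreducible in $\underline{\mathfrak{B}}(\mathbb{K})$.
   Context: For $u\le v$ in a lattice $L$, $[u,v]=\{x\mid u\le x\le v\}$, $(v]=\{x\mid x\le v\}$, $[u)=\{x\mid u\le x\}$. An interval $[u,v]$ of $L$ is quasi-dismantling for $L$ if $u$ is supremum-prime in $(v]$ (for all $x,y\in(v]$, $u\le x\vee y$ implies $u\le x$ or $u\le y$) and $v$ is infimum-prime in $[u)$ (for all $x,y\in[u)$, $x\wedge y\le v$ implies $x\le v$ or $y\le v$); it is dismantling for $L$ if moreover $u\neq\bot$ and $v\neq\top$. An element $c$ of a finite lattice is supremum-irreducible if it has exactly one lower neighbor, infimum-irreducible if it has exactly one upper neighbor, and doubly irreducible if both hold. The concept lattice $\underline{\mathfrak{B}}(\mathbb{K})$ is the set of formal concepts $(A,B)$ ($A\subseteq G$, $B\subseteq M$, $A'=B$, $B'=A$ with the usual derivation operators) ordered by inclusion of extents. *)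

theory Defs
  imports Main
begin

definition ctx_intent :: "'g set \<Rightarrow> 'm set \<Rightarrow> ('g \<times> 'm) set \<Rightarrow> 'g set \<Rightarrow> 'm set" where
  "ctx_intent G M I A = {m \<in> M. \<forall>g\<in>A. (g, m) \<in> I}"

definition ctx_extent :: "'g set \<Rightarrow> 'm set \<Rightarrow> ('g \<times> 'm) set \<Rightarrow> 'm set \<Rightarrow> 'g set" where
  "ctx_extent G M I B = {g \<in> G. \<forall>m\<in>B. (g, m) \<in> I}"

definition concepts :: "'g set \<Rightarrow> 'm set \<Rightarrow> ('g \<times> 'm) set \<Rightarrow> ('g set \<times> 'm set) set" where
  "concepts G M I = {(A, B). A \<subseteq> G \<and> B \<subseteq> M \<and> ctx_intent G M I A = B \<and> ctx_extent G M I B = A}"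

definition concept_le :: "('g set \<times> 'm set) \<Rightarrow> ('g set \<times> 'm set) \<Rightarrow> bool" where
  "concept_le c d = (fst c \<subseteq> fst d)"

definition is_lub :: "'a set \<Rightarrow> ('a \<Rightarrow> 'a \<Rightarrow> bool) \<Rightarrow> 'a \<Rightarrow> 'a \<Rightarrow> 'a \<Rightarrow> bool" where
  "is_lub L le x y z = (z \<in> L \<and> le x z \<and> le y z \<and> (\<forall>w\<in>L. le x w \<and> le y w \<longrightarrow> le z w))"

definition is_glb :: "'a set \<Rightarrow> ('a \<Rightarrow> 'a \<Rightarrow> bool) \<Rightarrow> 'a \<Rightarrow> 'a \<Rightarrow> 'a \<Rightarrow> bool" where
  "is_glb L le x y z = (z \<in> L \<and> le z x \<and> le z y \<and> (\<forall>w\<in>L. le w x \<and> le w y \<longrightarrow> le w z))"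

definition lat_sup :: "'a set \<Rightarrow> ('a \<Rightarrow> 'a \<Rightarrow> bool) \<Rightarrow> 'a \<Rightarrow> 'a \<Rightarrow> 'a" where
  "lat_sup L le x y = (THE z. is_lub L le x y z)"

definition lat_inf :: "'a set \<Rightarrow> ('a \<Rightarrow> 'a \<Rightarrow> bool) \<Rightarrow> 'a \<Rightarrow> 'a \<Rightarrow> 'a" where
  "lat_inf L le x y = (THE z. is_glb L le x y z)"

definition lat_bot :: "'a set \<Rightarrow> ('a \<Rightarrow> 'a \<Rightarrow> bool) \<Rightarrow> 'a" where
  "lat_bot L le = (THE z. z \<in> L \<and> (\<forall>x\<in>L. le z x))"

definition lat_top :: "'a set \<Rightarrow> ('a \<Rightarrow> 'a \<Rightarrow> bool) \<Rightarrow> 'a" where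
  "lat_top L le = (THE z. z \<in> L \<and> (\<forall>x\<in>L. le x z))"

definition lat_interval :: "'a set \<Rightarrow> ('a \<Rightarrow> 'a \<Rightarrow> bool) \<Rightarrow> 'a \<Rightarrow> 'a \<Rightarrow> 'a set" where
  "lat_interval L le u v = {x \<in> L. le u x \<and> le x v}"

definition sup_prime_in_down :: "'a set \<Rightarrow> ('a \<Rightarrow> 'a \<Rightarrow> bool) \<Rightarrow> 'a \<Rightarrow> 'a \<Rightarrow> bool" where
  "sup_prime_in_down L le u v = (\<forall>x\<in>L. \<forall>y\<in>L. le x v \<longrightarrow> le y v \<longrightarrow>
      le u (lat_sup L le x y) \<longrightarrow> le u x \<or> le u y)"

definition inf_prime_in_up :: "'a set \<Rightarrow> ('a \<Rightarrow> 'a \<Rightarrow> bool) \<Rightarrow> 'a \<Rightarrow> 'a \<Rightarrow> bool" where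
  "inf_prime_in_up L le u v = (\<forall>x\<in>L. \<forall>y\<in>L. le u x \<longrightarrow> le u y \<longrightarrow>
      le (lat_inf L le x y) v \<longrightarrow> le x v \<or> le y v)"

definition quasi_dismantling :: "'a set \<Rightarrow> ('a \<Rightarrow> 'a \<Rightarrow> bool) \<Rightarrow> 'a \<Rightarrow> 'a \<Rightarrow> bool" where
  "quasi_dismantling L le u v = (sup_prime_in_down L le u v \<and> inf_prime_in_up L le u v)"

definition dismantling :: "'a set \<Rightarrow> ('a \<Rightarrow> 'a \<Rightarrow> bool) \<Rightarrow> 'a \<Rightarrow> 'a \<Rightarrow> bool" where
  "dismantling L le u v = (quasi_dismantling L le u v \<and> u \<noteq> lat_bot L le \<and> v \<noteq> lat_top L le)"

definition lower_neighbors :: "'a set \<Rightarrow> ('a \<Rightarrow> 'a \<Rightarrow> bool) \<Rightarrow> 'a \<Rightarrow> 'a set" where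
  "lower_neighbors L le c = {x \<in> L. le x c \<and> x \<noteq> c \<and>
      \<not> (\<exists>z\<in>L. le x z \<and> z \<noteq> x \<and> le z c \<and> z \<noteq> c)}"

definition upper_neighbors :: "'a set \<Rightarrow> ('a \<Rightarrow> 'a \<Rightarrow> bool) \<Rightarrow> 'a \<Rightarrow> 'a set" where
  "upper_neighbors L le c = {x \<in> L. le c x \<and> x \<noteq> c \<and>
      \<not> (\<exists>z\<in>L. le c z \<and> z \<noteq> c \<and> le z x \<and> z \<noteq> x)}"

definition sup_irreducible :: "'a set \<Rightarrow> ('a \<Rightarrow> 'a \<Rightarrow> bool) \<Rightarrow> 'a \<Rightarrow> bool" where
  "sup_irreducible L le c = (card (lower_neighbors L le c) = 1)"

definition inf_irreducible :: "'a set \<Rightarrow> ('a \<Rightarrow> 'a \<Rightarrow> bool) \<Rightarrow> 'a \<Rightarrow> bool" where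
  "inf_irreducible L le c = (card (upper_neighbors L le c) = 1)"

definition doubly_irreducible :: "'a set \<Rightarrow> ('a \<Rightarrow> 'a \<Rightarrow> bool) \<Rightarrow> 'a \<Rightarrow> bool" where
  "doubly_irreducible L le c = (sup_irreducible L le c \<and> inf_irreducible L le c)"

end

theory Submission
  imports Defs
begin

text \<open>In a finite lattice, an element s is supremum-irreducible exactly when its unique lower
  neighbour l bounds everything strictly below s; then x, y \<le> l forces x \<squnion> y \<le> l < s, which is
  supremum-primality of s in (s]. Conversely two distinct lower neighbours would join to s,
  and if s had no lower neighbour it would be the bottom. Infimum-irreducibility is the order
  dual, and a one-element interval [u, v] = {s} forces u = v = s.\<close>

locale finite_bounded_lattice_on =
  fixes L :: "'a set" and le :: "'a \<Rightarrow> 'a \<Rightarrow> bool"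
  assumes finite: "finite L"
    and refl: "x \<in> L \<Longrightarrow> le x x"
    and antisym: "x \<in> L \<Longrightarrow> y \<in> L \<Longrightarrow> le x y \<Longrightarrow> le y x \<Longrightarrow> x = y"
    and trans: "x \<in> L \<Longrightarrow> y \<in> L \<Longrightarrow> z \<in> L \<Longrightarrow> le x y \<Longrightarrow> le y z \<Longrightarrow> le x z"
    and lub_exists: "x \<in> L \<Longrightarrow> y \<in> L \<Longrightarrow> \<exists>z. is_lub L le x y z"
    and glb_exists: "x \<in> L \<Longrightarrow> y \<in> L \<Longrightarrow> \<exists>z. is_glb L le x y z"
    and bot_exists: "\<exists>b\<in>L. \<forall>x\<in>L. le b x"
    and top_exists: "\<exists>t\<in>L. \<forall>x\<in>L. le x t"
begin

lemma lat_sup_is_lub: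
  assumes "x \<in> L" "y \<in> L"
  shows "is_lub L le x y (lat_sup L le x y)"
proof -
  obtain z where z: "is_lub L le x y z" using lub_exists assms by blast
  have "lat_sup L le x y = z"
    unfolding lat_sup_def using z antisym by (intro the_equality) (auto simp: is_lub_def)
  with z show ?thesis by simp
qed

lemma lat_bot_least: "lat_bot L le \<in> L" "x \<in> L \<Longrightarrow> le (lat_bot L le) x"
proof -
  obtain b where b: "b \<in> L" "\<forall>x\<in>L. le b x" using bot_exists by blast
  have "lat_bot L le = b"
    unfolding lat_bot_def using b antisym by (intro the_equality) auto
  with b show "lat_bot L le \<in> L" "x \<in> L \<Longrightarrow> le (lat_bot L le) x" by auto
qed

lemma lower_neighborD:
  assumes "l \<in> lower_neighbors L le s"
  shows "l \<in> L" "le l s" "l \<noteq> s"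
    and "z \<in> L \<Longrightarrow> le l z \<Longrightarrow> le z s \<Longrightarrow> z \<noteq> s \<Longrightarrow> z = l"
  using assms unfolding lower_neighbors_def by blast+

text \<open>An element of C = [x, s) with the fewest upper bounds in L is maximal in C, hence a
  lower neighbour of s.\<close>
lemma lower_neighbor_above:
  assumes x: "x \<in> L" and s: "s \<in> L" and "le x s" "x \<noteq> s"
  obtains l where "l \<in> lower_neighbors L le s" "le x l"
proof -
  define C where "C = {z \<in> L. le x z \<and> le z s \<and> z \<noteq> s}"
  define up where "up z = {w \<in> L. le z w}" for z
  have "x \<in> C" using assms refl unfolding C_def by blast
  then obtain z where z: "z \<in> C" and z_min: "\<And>w. w \<in> C \<Longrightarrow> card (up z) \<le> card (up w)"
    using ex_has_least_nat[of "\<lambda>z. z \<in> C" x "\<lambda>z. card (up z)"] by blast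
  have "w = z" if w: "w \<in> L" "le z w" "le w s" "w \<noteq> s" for w
  proof (rule ccontr)
    assume "w \<noteq> z"
    have "w \<in> C" using w z x trans unfolding C_def by blast
    have "up w \<subseteq> up z" using w z trans unfolding up_def C_def by blast
    moreover have "z \<in> up z - up w" using w z refl antisym \<open>w \<noteq> z\<close> unfolding up_def C_def by blast
    ultimately have "card (up w) < card (up z)"
      using finite by (intro psubset_card_mono) (auto simp: up_def)
    with z_min[OF \<open>w \<in> C\<close>] show False by simp
  qed
  then have "z \<in> lower_neighbors L le s" using z unfolding C_def lower_neighbors_def by blast
  then show thesis using that z unfolding C_def by blast
qed

lemma sup_irreducible_if_sup_prime:
  assumes s: "s \<in> L" and prime: "sup_prime_in_down L le s s" and not_bot: "s \<noteq> lat_bot L le"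
  shows "sup_irreducible L le s"
proof -
  have "lat_bot L le \<noteq> s" using not_bot by simp
  then obtain a where a: "a \<in> lower_neighbors L le s" and "le (lat_bot L le) a"
    by (rule lower_neighbor_above[OF lat_bot_least(1) s lat_bot_least(2)[OF s]])
  have "c = a" if c: "c \<in> lower_neighbors L le s" for c
  proof (rule ccontr)
    assume "c \<noteq> a"
    note a_nb = lower_neighborD[OF a] and c_nb = lower_neighborD[OF c]
    define j where "j = lat_sup L le a c"
    have j: "j \<in> L" "le a j" "le c j" "le j s"
      using lat_sup_is_lub[OF a_nb(1) c_nb(1)] s a_nb c_nb unfolding j_def is_lub_def by auto
    have "j \<noteq> a"
    proof
      assume "j = a"
      with j have "le c a" by simp
      with c_nb(4)[OF a_nb(1)] a_nb \<open>c \<noteq> a\<close> show False by blast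
    qed
    then have "j = s" using a_nb(4)[OF j(1,2,4)] by blast
    then have "le s a \<or> le s c"
      using prime a_nb c_nb refl[OF s] unfolding sup_prime_in_down_def j_def by blast
    then show False using antisym s a_nb c_nb by blast
  qed
  with a have "lower_neighbors L le s = {a}" by blast
  then show ?thesis unfolding sup_irreducible_def by simp
qed

lemma sup_prime_if_sup_irreducible:
  assumes s: "s \<in> L" and "sup_irreducible L le s"
  shows "sup_prime_in_down L le s s" and "s \<noteq> lat_bot L le"
proof -
  obtain l where l_nb: "lower_neighbors L le s = {l}"
    using \<open>sup_irreducible L le s\<close> unfolding sup_irreducible_def by (metis card_1_singletonE)
  have l: "l \<in> L" "le l s" "l \<noteq> s" using lower_neighborD[of l s] l_nb by auto
  have not_le_l: "\<not> le s l" using antisym s l by blast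
  show "s \<noteq> lat_bot L le"
  proof
    assume "s = lat_bot L le"
    with lat_bot_least(2)[OF l(1)] not_le_l show False by simp
  qed
  have below_l: "le x l" if x: "x \<in> L" "le x s" "\<not> le s x" for x
  proof -
    have "x \<noteq> s" using x(3) refl[OF s] by blast
    then obtain l' where "l' \<in> lower_neighbors L le s" "le x l'"
      by (rule lower_neighbor_above[OF x(1) s x(2)])
    with l_nb show ?thesis by simp
  qed
  show "sup_prime_in_down L le s s"
    unfolding sup_prime_in_down_def
  proof (intro ballI impI)
    fix x y assume xy: "x \<in> L" "y \<in> L" "le x s" "le y s" and s_le: "le s (lat_sup L le x y)"
    have j: "lat_sup L le x y \<in> L" "\<forall>w\<in>L. le x w \<and> le y w \<longrightarrow> le (lat_sup L le x y) w"
      using lat_sup_is_lub[OF xy(1,2)] unfolding is_lub_def by blast+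
    show "le s x \<or> le s y"
    proof (rule ccontr)
      assume "\<not> (le s x \<or> le s y)"
      with below_l xy have "le x l" "le y l" by blast+
      with j l(1) have "le (lat_sup L le x y) l" by blast
      with trans[OF s j(1) l(1) s_le] not_le_l show False by blast
    qed
  qed
qed

lemma sup_irreducible_iff_sup_prime:
  "s \<in> L \<Longrightarrow> sup_irreducible L le s \<longleftrightarrow> sup_prime_in_down L le s s \<and> s \<noteq> lat_bot L le"
  using sup_irreducible_if_sup_prime sup_prime_if_sup_irreducible by blast

end


lemma is_lub_conversep: "is_lub L le\<inverse>\<inverse> = is_glb L le"
  unfolding is_lub_def is_glb_def by (intro ext) auto

lemma is_glb_conversep: "is_glb L le\<inverse>\<inverse> = is_lub L le"
  unfolding is_lub_def is_glb_def by (intro ext) auto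

lemma lat_sup_conversep: "lat_sup L le\<inverse>\<inverse> = lat_inf L le"
  unfolding lat_sup_def lat_inf_def is_lub_conversep ..

lemma lat_bot_conversep: "lat_bot L le\<inverse>\<inverse> = lat_top L le"
  unfolding lat_bot_def lat_top_def by simp

lemma sup_prime_in_down_conversep: "sup_prime_in_down L le\<inverse>\<inverse> v u = inf_prime_in_up L le u v"
  unfolding sup_prime_in_down_def inf_prime_in_up_def lat_sup_conversep by auto

lemma sup_irreducible_conversep: "sup_irreducible L le\<inverse>\<inverse> = inf_irreducible L le"
proof -
  have "lower_neighbors L le\<inverse>\<inverse> = upper_neighbors L le"
    unfolding lower_neighbors_def upper_neighbors_def by (intro ext) auto
  then show ?thesis unfolding sup_irreducible_def inf_irreducible_def by simp
qed

lemma finite_bounded_lattice_on_conversep: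
  assumes "finite_bounded_lattice_on L le"
  shows "finite_bounded_lattice_on L le\<inverse>\<inverse>"
proof -
  interpret finite_bounded_lattice_on L le by fact
  show ?thesis
  proof
    fix x y z assume "x \<in> L" "y \<in> L" "z \<in> L"
    then show "le\<inverse>\<inverse> x x"
      and "le\<inverse>\<inverse> x y \<Longrightarrow> le\<inverse>\<inverse> y x \<Longrightarrow> x = y"
      and "le\<inverse>\<inverse> x y \<Longrightarrow> le\<inverse>\<inverse> y z \<Longrightarrow> le\<inverse>\<inverse> x z"
      and "\<exists>j. is_lub L le\<inverse>\<inverse> x y j"
      and "\<exists>m. is_glb L le\<inverse>\<inverse> x y m"
      using refl antisym[of x y] trans[of z y x] glb_exists[of x y] lub_exists[of x y]
      by (simp_all add: is_lub_conversep is_glb_conversep)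
  qed (use finite bot_exists top_exists in simp_all)
qed

context finite_bounded_lattice_on
begin

lemma inf_irreducible_iff_inf_prime:
  assumes "s \<in> L"
  shows "inf_irreducible L le s \<longleftrightarrow> inf_prime_in_up L le s s \<and> s \<noteq> lat_top L le"
proof -
  interpret dual: finite_bounded_lattice_on L "le\<inverse>\<inverse>"
    by (rule finite_bounded_lattice_on_conversep) (rule finite_bounded_lattice_on_axioms)
  show ?thesis
    using dual.sup_irreducible_iff_sup_prime[OF assms]
    unfolding sup_irreducible_conversep sup_prime_in_down_conversep lat_bot_conversep .
qed

lemma dismantling_singleton_iff_doubly_irreducible:
  "s \<in> L \<Longrightarrow> dismantling L le s s \<longleftrightarrow> doubly_irreducible L le s"
  unfolding dismantling_def quasi_dismantling_def doubly_irreducible_def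
  using sup_irreducible_iff_sup_prime inf_irreducible_iff_inf_prime by blast

end


lemma ctx_extent_subset: "ctx_extent G M I B \<subseteq> G"
  unfolding ctx_extent_def by auto

lemma ctx_intent_subset: "ctx_intent G M I A \<subseteq> M"
  unfolding ctx_intent_def by auto

lemma ctx_extent_antimono: "B \<subseteq> B' \<Longrightarrow> ctx_extent G M I B' \<subseteq> ctx_extent G M I B"
  unfolding ctx_extent_def by auto

lemma ctx_intent_antimono: "A \<subseteq> A' \<Longrightarrow> ctx_intent G M I A' \<subseteq> ctx_intent G M I A"
  unfolding ctx_intent_def by auto

lemma ctx_extent_intent_increasing: "A \<subseteq> G \<Longrightarrow> A \<subseteq> ctx_extent G M I (ctx_intent G M I A)"
  unfolding ctx_extent_def ctx_intent_def by auto

lemma ctx_intent_extent_increasing: "B \<subseteq> M \<Longrightarrow> B \<subseteq> ctx_intent G M I (ctx_extent G M I B)"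
  unfolding ctx_extent_def ctx_intent_def by auto

lemma ctx_extent_Un: "ctx_extent G M I (B \<union> B') = ctx_extent G M I B \<inter> ctx_extent G M I B'"
  unfolding ctx_extent_def by auto

lemma ctx_intent_extent_intent:
  "A \<subseteq> G \<Longrightarrow> ctx_intent G M I (ctx_extent G M I (ctx_intent G M I A)) = ctx_intent G M I A"
  by (meson ctx_extent_intent_increasing ctx_intent_antimono ctx_intent_extent_increasing
      ctx_intent_subset subset_antisym)

lemma ctx_extent_intent_extent:
  "B \<subseteq> M \<Longrightarrow> ctx_extent G M I (ctx_intent G M I (ctx_extent G M I B)) = ctx_extent G M I B"
  by (meson ctx_intent_extent_increasing ctx_extent_antimono ctx_extent_intent_increasing
      ctx_extent_subset subset_antisym)

lemma concept_of_extent: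
  "A \<subseteq> G \<Longrightarrow> (ctx_extent G M I (ctx_intent G M I A), ctx_intent G M I A) \<in> concepts G M I"
  unfolding concepts_def by (simp add: ctx_intent_extent_intent ctx_extent_subset ctx_intent_subset)

lemma concept_of_intent:
  "B \<subseteq> M \<Longrightarrow> (ctx_extent G M I B, ctx_intent G M I (ctx_extent G M I B)) \<in> concepts G M I"
  unfolding concepts_def by (simp add: ctx_extent_intent_extent ctx_extent_subset ctx_intent_subset)

lemma conceptD:
  assumes "c \<in> concepts G M I"
  shows "fst c \<subseteq> G" "snd c \<subseteq> M"
    "ctx_intent G M I (fst c) = snd c" "ctx_extent G M I (snd c) = fst c"
  using assms unfolding concepts_def by auto

lemma concept_eqI: "c \<in> concepts G M I \<Longrightarrow> d \<in> concepts G M I \<Longrightarrow> fst c = fst d \<Longrightarrow> c = d"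
  by (metis conceptD(3) prod_eq_iff)

lemma concepts_is_lub:
  assumes "c \<in> concepts G M I" "d \<in> concepts G M I"
  shows "is_lub (concepts G M I) concept_le c d
           (ctx_extent G M I (ctx_intent G M I (fst c \<union> fst d)), ctx_intent G M I (fst c \<union> fst d))"
    (is "is_lub _ _ _ _ ?j")
proof -
  let ?U = "fst c \<union> fst d"
  have U: "?U \<subseteq> G" using conceptD(1) assms by blast
  have "?j \<in> concepts G M I" using concept_of_extent[OF U] .
  moreover have "?U \<subseteq> fst ?j" using ctx_extent_intent_increasing[OF U] by simp
  moreover have "fst ?j \<subseteq> fst e" if e: "e \<in> concepts G M I" "?U \<subseteq> fst e" for e
  proof -
    have "ctx_intent G M I (fst e) \<subseteq> ctx_intent G M I ?U" using e(2) by (rule ctx_intent_antimono)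
    then have "fst ?j \<subseteq> ctx_extent G M I (ctx_intent G M I (fst e))" by (simp add: ctx_extent_antimono)
    then show ?thesis using conceptD(3,4)[OF e(1)] by simp
  qed
  ultimately show ?thesis unfolding is_lub_def concept_le_def by blast
qed

lemma concepts_is_glb:
  assumes "c \<in> concepts G M I" "d \<in> concepts G M I"
  shows "is_glb (concepts G M I) concept_le c d
           (ctx_extent G M I (snd c \<union> snd d), ctx_intent G M I (ctx_extent G M I (snd c \<union> snd d)))"
    (is "is_glb _ _ _ _ ?m")
proof -
  have "snd c \<union> snd d \<subseteq> M" using conceptD(2) assms by blast
  then have "?m \<in> concepts G M I" by (rule concept_of_intent)
  moreover have "fst ?m = fst c \<inter> fst d"
    unfolding ctx_extent_Un using conceptD(4)[OF assms(1)] conceptD(4)[OF assms(2)] by simp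
  ultimately show ?thesis unfolding is_glb_def concept_le_def by auto
qed

lemma finite_concepts:
  assumes "finite G"
  shows "finite (concepts G M I)"
proof (rule finite_imageD)
  have "fst ` concepts G M I \<subseteq> Pow G" using conceptD(1) by blast
  then show "finite (fst ` concepts G M I)" using assms by (meson finite_Pow_iff finite_subset)
  show "inj_on fst (concepts G M I)" by (meson concept_eqI inj_onI)
qed

lemma concepts_finite_bounded_lattice:
  assumes "finite G"
  shows "finite_bounded_lattice_on (concepts G M I) concept_le"
proof
  show "finite (concepts G M I)" using assms by (rule finite_concepts)
next
  fix c d e assume c: "c \<in> concepts G M I" and d: "d \<in> concepts G M I" and "e \<in> concepts G M I"
  show "concept_le c c" unfolding concept_le_def ..
  show "concept_le c d \<Longrightarrow> concept_le d c \<Longrightarrow> c = d"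
    unfolding concept_le_def using c d by (meson concept_eqI subset_antisym)
  show "concept_le c d \<Longrightarrow> concept_le d e \<Longrightarrow> concept_le c e"
    unfolding concept_le_def by (rule subset_trans)
  show "\<exists>z. is_lub (concepts G M I) concept_le c d z" using concepts_is_lub[OF c d] ..
  show "\<exists>z. is_glb (concepts G M I) concept_le c d z" using concepts_is_glb[OF c d] ..
next
  let ?b = "(ctx_extent G M I M, ctx_intent G M I (ctx_extent G M I M))"
  have "concept_le ?b c" if "c \<in> concepts G M I" for c
    using ctx_extent_antimono[OF conceptD(2)[OF that], of G M I] conceptD(4)[OF that]
    unfolding concept_le_def by simp
  moreover have "?b \<in> concepts G M I" by (rule concept_of_intent) simp
  ultimately show "\<exists>b\<in>concepts G M I. \<forall>c\<in>concepts G M I. concept_le b c" by blast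
next
  let ?t = "(ctx_extent G M I (ctx_intent G M I G), ctx_intent G M I G)"
  have "concept_le c ?t" if "c \<in> concepts G M I" for c
    using conceptD(1)[OF that] ctx_extent_intent_increasing[of G G M I]
    unfolding concept_le_def by auto
  moreover have "?t \<in> concepts G M I" by (rule concept_of_extent) simp
  ultimately show "\<exists>t\<in>concepts G M I. \<forall>c\<in>concepts G M I. concept_le c t" by blast
qed

theorem proposition2:
  fixes G :: "'g set" and M :: "'m set" and I :: "('g \<times> 'm) set"
    and u v s :: "'g set \<times> 'm set"
  assumes "finite G" and "finite M" and "I \<subseteq> G \<times> M"
    and "u \<in> concepts G M I" and "v \<in> concepts G M I" and "concept_le u v"
    and "lat_interval (concepts G M I) concept_le u v = {s}"
  shows "dismantling (concepts G M I) concept_le u v \<longleftrightarrow>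
         doubly_irreducible (concepts G M I) concept_le s"
proof -
  interpret finite_bounded_lattice_on "concepts G M I" concept_le
    using concepts_finite_bounded_lattice[OF \<open>finite G\<close>] .
  have "u \<in> lat_interval (concepts G M I) concept_le u v"
    and "v \<in> lat_interval (concepts G M I) concept_le u v"
    unfolding lat_interval_def using assms(4-6) refl by auto
  then have "u = s" "v = s" using assms(7) by auto
  then show ?thesis using dismantling_singleton_iff_doubly_irreducible assms(4) by simp
qed

end
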